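(* Let $\Omega\subset\mathbb{R}^n$ be a convex body and fix an incentre $c$ of $\Omega$. For any $\varepsilon\in[0,\mathrm{In}(\Omega)]$, $$L_\varepsilon(\Omega)\subset \Omega\setminus \mathrm{Int}\Big[\Big(1-\frac{\varepsilon}{\mathrm{In}(\Omega)}\Big)\cdot\Omega\Big],$$ where for $\lambda\ge 0$, $\lambda\cdot\Omega=\{c+\lambda(x-c): x\in\Omega\}$ denotes the enlargement of $\Omega$ with scale factor $\lambda$ about $c$.
   Context: A convex body is a convex, closed subset of $\mathbb{R}^n$ with non-empty interior. $\mathrm{In}(\Omega)$ is the inradius of $\Omega$: the largest distance from $\partial\Omega$ of a point of $\Omega$ (equivalently the radius of the largest ball contained in $\Omega$). An incentre is a point of $\Omega$ at maximal distance $\mathrm{In}(\Omega)$ from $\partial\Omega$. The $\varepsilon$-inner neighbourhood is $L_\varepsilon(\Omega)=\{x\in\Omega:\|x-y\|\le\varepsilon\text{ for some }y\in\partial\Omega\}$. $\mathrm{Int}$ denotes interior. *)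

theory Defs
  imports "HOL-Analysis.Analysis"
begin

definition convex_body :: "'a::euclidean_space set \<Rightarrow> bool" where
  "convex_body \<Omega> \<longleftrightarrow> convex \<Omega> \<and> closed \<Omega> \<and> interior \<Omega> \<noteq> {}"

definition inradius :: "'a::euclidean_space set \<Rightarrow> real" where
  "inradius \<Omega> = (SUP x\<in>\<Omega>. infdist x (frontier \<Omega>))"

definition is_incentre :: "'a::euclidean_space set \<Rightarrow> 'a \<Rightarrow> bool" where
  "is_incentre \<Omega> c \<longleftrightarrow> c \<in> \<Omega> \<and> (\<forall>x\<in>\<Omega>. infdist x (frontier \<Omega>) \<le> infdist c (frontier \<Omega>))"

definition inner_nbhd :: "real \<Rightarrow> 'a::euclidean_space set \<Rightarrow> 'a set" where
  "inner_nbhd \<epsilon> \<Omega> = {x\<in>\<Omega>. \<exists>y\<in>frontier \<Omega>. norm (x - y) \<le> \<epsilon>}"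

definition enlarge :: "'a::euclidean_space \<Rightarrow> real \<Rightarrow> 'a set \<Rightarrow> 'a set" where
  "enlarge c t \<Omega> = (\<lambda>x. c + t *\<^sub>R (x - c)) ` \<Omega>"

end

theory Submission
  imports Defs
begin

text \<open>Let \<open>r = In(\<Omega>)\<close>; since \<open>c\<close> is an incentre, the closed ball of radius \<open>r\<close> about \<open>c\<close>
  lies in \<open>\<Omega>\<close>. A point \<open>x = c + \<lambda>(w - c)\<close> of the shrunken interior, \<open>\<lambda> = 1 - \<epsilon>/r\<close>, is the
  centre of the homothetic image \<open>\<lambda>w + (1 - \<lambda>) B(c, r)\<close> of that ball, a ball of radius
  \<open>(1 - \<lambda>) r = \<epsilon>\<close>; by convexity it lies in \<open>Int \<Omega>\<close>. Hence every point within distance \<open>\<epsilon>\<close>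
  of \<open>x\<close> is interior, so \<open>x \<notin> L\<^sub>\<epsilon>(\<Omega>)\<close>.\<close>

lemma inradius_eq_infdist_incentre:
  assumes "is_incentre \<Omega> c"
  shows "inradius \<Omega> = infdist c (frontier \<Omega>)"
  unfolding inradius_def
  by (rule cSup_eq_maximum) (use assms in \<open>auto simp: is_incentre_def\<close>)

lemma ball_infdist_frontier_subset:
  fixes S :: "'a::real_normed_vector set"
  assumes "c \<in> S"
  shows "ball c (infdist c (frontier S)) \<subseteq> S"
proof
  fix p assume p: "p \<in> ball c (infdist c (frontier S))"
  show "p \<in> S"
  proof (rule ccontr)
    assume "p \<notin> S"
    have "c \<in> ball c (infdist c (frontier S))"
      using p by (metis centre_in_ball le_less_trans mem_ball zero_le_dist)
    then have "ball c (infdist c (frontier S)) \<inter> frontier S \<noteq> {}"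
      using connected_Int_frontier[of "ball c (infdist c (frontier S))" S] p \<open>p \<notin> S\<close> assms
      by blast
    then obtain q where "q \<in> frontier S" "dist c q < infdist c (frontier S)"
      by auto
    then show False
      using infdist_le[of q "frontier S" c] by simp
  qed
qed

lemma cball_infdist_frontier_subset:
  fixes S :: "'a::real_normed_vector set"
  assumes "closed S" "c \<in> S"
  shows "cball c (infdist c (frontier S)) \<subseteq> S"
proof (cases "infdist c (frontier S) = 0")
  case False
  then have "cball c (infdist c (frontier S)) = closure (ball c (infdist c (frontier S)))"
    using infdist_nonneg[of c "frontier S"] by simp
  also have "\<dots> \<subseteq> S"
    using closure_minimal[OF ball_infdist_frontier_subset[OF assms(2)] assms(1)] .
  finally show ?thesis .
qed (use assms in simp)

lemma enlarge_eq_translation_scaleR: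
  "enlarge c t S = (+) c ` (\<lambda>x. t *\<^sub>R x) ` (\<lambda>x. x - c) ` S"
  unfolding enlarge_def by (simp add: image_image)

lemma interior_enlarge:
  fixes S :: "'a::euclidean_space set"
  assumes "t \<noteq> 0"
  shows "interior (enlarge c t S) = enlarge c t (interior S)"
proof -
  have lin: "linear (\<lambda>x::'a. t *\<^sub>R x)" by (simp add: linear_scaleR)
  have inj: "inj (\<lambda>x::'a. t *\<^sub>R x)" using assms by (simp add: inj_on_def)
  show ?thesis
    unfolding enlarge_eq_translation_scaleR interior_translation
      interior_injective_linear_image[OF lin inj] interior_translation_subtract ..
qed

lemma cball_shrink_interior_subset:
  fixes S :: "'a::euclidean_space set"
  assumes "convex S" "cball c r \<subseteq> closure S" "w \<in> interior S" "0 < l" "l \<le> 1"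
  shows "cball (c + l *\<^sub>R (w - c)) ((1 - l) * r) \<subseteq> interior S"
proof
  fix y assume y: "y \<in> cball (c + l *\<^sub>R (w - c)) ((1 - l) * r)"
  show "y \<in> interior S"
  proof (cases "l = 1")
    case True
    then show ?thesis using y assms(3) by simp
  next
    case False
    with assms(5) have l1: "0 < 1 - l" by simp
    define x where "x = c + l *\<^sub>R (w - c)"
    define z where "z = c + (1 / (1 - l)) *\<^sub>R (y - x)"
    have "dist c z = norm (y - x) / (1 - l)"
      using l1 by (simp add: z_def dist_norm)
    also have "\<dots> \<le> r"
      using y l1 by (simp add: x_def dist_norm norm_minus_commute pos_divide_le_eq mult.commute)
    finally have "z \<in> closure S" using assms(2) by auto
    then have "z - l *\<^sub>R (z - w) \<in> interior S"
      using mem_interior_closure_convex_shrink[OF assms(1,3)] assms(4,5) by blast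
    moreover have "z - l *\<^sub>R (z - w) = y"
    proof -
      have "(1 - l) *\<^sub>R z = (1 - l) *\<^sub>R c + (y - x)"
        using l1 by (simp add: z_def algebra_simps)
      then show ?thesis by (simp add: x_def algebra_simps)
    qed
    ultimately show ?thesis by simp
  qed
qed

lemma cball_interior_enlarge_subset:
  fixes S :: "'a::euclidean_space set"
  assumes "convex S" "cball c r \<subseteq> closure S" "0 \<le> l" "l \<le> 1"
    and "x \<in> interior (enlarge c l S)"
  shows "cball x ((1 - l) * r) \<subseteq> interior S"
proof -
  have "enlarge c 0 S \<subseteq> {c}" by (auto simp: enlarge_def)
  then have "interior (enlarge c 0 S) = {}"
    by (metis interior_mono interior_singleton subset_empty)
  with assms(5) have "l \<noteq> 0" by auto
  with assms(3) have "0 < l" by simp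
  have "x \<in> enlarge c l (interior S)"
    using assms(5) by (simp add: interior_enlarge[OF \<open>l \<noteq> 0\<close>])
  then obtain w where "w \<in> interior S" "x = c + l *\<^sub>R (w - c)"
    by (auto simp: enlarge_def)
  then show ?thesis
    using cball_shrink_interior_subset[OF assms(1,2) _ \<open>0 < l\<close> assms(4)] by blast
qed

lemma cball_inradius_subset:
  assumes "closed \<Omega>" "is_incentre \<Omega> c"
  shows "cball c (inradius \<Omega>) \<subseteq> \<Omega>"
  using cball_infdist_frontier_subset[OF assms(1)] assms(2)
  by (simp add: inradius_eq_infdist_incentre is_incentre_def)

theorem mainTheorem2:
  fixes \<Omega> :: "'a::euclidean_space set" and c :: 'a and \<epsilon> :: real
  assumes "convex_body \<Omega>"
    and "is_incentre \<Omega> c"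
    and "0 \<le> \<epsilon>" and "\<epsilon> \<le> inradius \<Omega>"
  shows "inner_nbhd \<epsilon> \<Omega> \<subseteq>
           \<Omega> - interior (enlarge c (1 - \<epsilon> / inradius \<Omega>) \<Omega>)"
proof
  fix x assume "x \<in> inner_nbhd \<epsilon> \<Omega>"
  then obtain y where x: "x \<in> \<Omega>" and y: "y \<in> frontier \<Omega>" "dist x y \<le> \<epsilon>"
    by (auto simp: inner_nbhd_def dist_norm)
  have "convex \<Omega>" "closed \<Omega>" using assms(1) by (auto simp: convex_body_def)
  define r where "r = inradius \<Omega>"
  define l where "l = 1 - \<epsilon> / r"
  have ball: "cball c r \<subseteq> closure \<Omega>"
    using cball_inradius_subset[OF \<open>closed \<Omega>\<close> assms(2)] closure_subset by (auto simp: r_def)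
  have "0 \<le> l" "l \<le> 1" "(1 - l) * r = \<epsilon>"
    using assms(3,4) by (auto simp: l_def r_def divide_le_eq_1)
  have "x \<notin> interior (enlarge c l \<Omega>)"
  proof
    assume "x \<in> interior (enlarge c l \<Omega>)"
    then have "cball x \<epsilon> \<subseteq> interior \<Omega>"
      using cball_interior_enlarge_subset[OF \<open>convex \<Omega>\<close> ball \<open>0 \<le> l\<close> \<open>l \<le> 1\<close>]
        \<open>(1 - l) * r = \<epsilon>\<close>
      by simp
    then have "y \<in> interior \<Omega>" using y(2) by auto
    then show False using y(1) by (simp add: frontier_def)
  qed
  then show "x \<in> \<Omega> - interior (enlarge c (1 - \<epsilon> / inradius \<Omega>) \<Omega>)"
    using x by (simp add: l_def r_def)
qed

end
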